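(* Let $\mathbb X=\mathbb X^1\times\mathbb X^2$, let $S\colon\mathbb X^1\rightrightarrows\mathbb X^2$ have closed graph, let $\Omega\subset\mathbb X^1$ be closed, and define $\Phi\colon\mathbb X\rightrightarrows\mathbb X^1\times\mathbb X^2$ by $\Phi(x):=(\Omega-x^1,\,S(x^1)-x^2)$ for $x=(x^1,x^2)$. Fix $(\bar x,0)\in\operatorname{gph}\Phi$ and $u=(u^1,u^2)\in\mathbb S_{\mathbb X}$. Write $y=(y^1,y^2)$ for elements of $\mathbb X^1\times\mathbb X^2$. (i) Suppose there is no nonzero $\lambda\in D^*S((\bar x^1,\bar x^2);(u^1,u^2))(0)\cap(-\mathcal N_\Omega(\bar x^1;u^1))$ for which there exist sequences $\{(x_k,y_k)\}\subset\operatorname{gph}\Phi$ with $x_k\ne\bar x$, $\{\lambda_k\},\{\eta_k\}\subset\mathbb X^1$, $\{\mu_k\}\subset\mathbb X^2$ with $x_k\to\bar x$, $y_k\to0$, $\lambda_k\to\lambda$, $\mu_k\to0$, $\eta_k\to0$, $(x_k-\bar x)/\|x_k-\bar x\|\to u$, $y_k/\|x_k-\bar x\|\to0$, and, for all $k$, $\eta_k+\lambda_k\in\widehat D^*S(x_k^1,x_k^2+y_k^2)(\mu_k)$, $-\lambda_k\in\widehat{\mathcal N}_\Omega(x_k^1+y_k^1)$, and $\langle\lambda,y_k^1\rangle>0$. Then $\Phi$ is pseudo-normal at $(\bar x,0)$ in direction $u$. (ii) Let $\mathcal E^j=\{e^j_1,\dots,e^j_{m_j}\}$ be an orthonormal basis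 of $\mathbb X^j$, $j=1,2$. Suppose there is no nonzero $\lambda$ as in (i) for which there exist sequences as in (i) satisfying the same convergences and, for all $k$ and $i\in\{1,\dots,m_1\}$, $\eta_k+\lambda_k\in\widehat D^*S(x_k^1,x_k^2+y_k^2)(\mu_k)$, $-\lambda_k\in\widehat{\mathcal N}_\Omega(x_k^1+y_k^1)$, and $\langle\lambda,e^1_i\rangle\langle y_k^1,e^1_i\rangle>0$ whenever $\langle\lambda,e^1_i\rangle\ne0$. Then $\Phi$ is quasi-normal at $(\bar x,0)$ in direction $u$ w.r.t. the orthonormal basis $\mathcal E^1\times\mathcal E^2$ of $\mathbb X$ (i.e. $\{(e^1_i,0)\}\cup\{(0,e^2_j)\}$).
   Context: $\widehat{\mathcal N}_\Omega$ regular normal cone; $\mathcal N_\Omega(\bar x^1;u^1)$ directional limiting normal cone (limits of $\eta_k\in\widehat{\mathcal N}_\Omega(\bar x^1+t_kw_k)$, $w_k\to u^1$, $t_k\searrow0$). $\widehat D^*S(x^1,x^2)(\mu)=\{\xi\mid(\xi,-\mu)\in\widehat{\mathcal N}_{\operatorname{gph}S}(x^1,x^2)\}$; $D^*S((\bar x^1,\bar x^2);(u^1,u^2))(\mu)=\{\xi\mid(\xi,-\mu)\in\mathcal N_{\operatorname{gph}S}((\bar x^1,\bar x^2);(u^1,u^2))\}$. Directional pseudo-/quasi-normality of a closed-graph map $\Phi\colon\mathbb X\rightrightarrows\mathbb Y$ at $(\bar x,\bar y)$ in direction $u$: there is no nonzero $\lambda$ with $0\in D^*\Phi((\bar x,\bar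 y);(u,0))(\lambda)$ for which there exist $\{(x_k,y_k)\}\subset\operatorname{gph}\Phi$, $x_k\ne\bar x$, $\{\lambda_k\}\subset\mathbb Y$, $\{\eta_k\}\subset\mathbb X$ with $x_k\to\bar x$, $y_k\to\bar y$, $\lambda_k\to\lambda$, $\eta_k\to0$, $(x_k-\bar x)/\|x_k-\bar x\|\to u$, $(y_k-\bar y)/\|x_k-\bar x\|\to0$, $\eta_k\in\widehat D^*\Phi(x_k,y_k)(\lambda_k)$ for all $k$, and (pseudo) $\langle\lambda,y_k-\bar y\rangle>0$ for all $k$, resp. (quasi, w.r.t. orthonormal basis $\{e_i\}$ of $\mathbb Y$) $\langle\lambda,e_i\rangle\langle y_k-\bar y,e_i\rangle>0$ whenever $\langle\lambda,e_i\rangle\ne0$. *)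

theory Defs
  imports "HOL-Analysis.Analysis"
begin

definition gph :: "('x \<Rightarrow> 'y set) \<Rightarrow> ('x \<times> 'y) set" where
  "gph F = {(x, y). y \<in> F x}"

definition reg_normal :: "'a::real_inner set \<Rightarrow> 'a \<Rightarrow> 'a set" where
  "reg_normal \<Omega> x =
     (if x \<in> \<Omega> then
        {v. \<forall>\<epsilon>>0. \<exists>\<delta>>0. \<forall>x'\<in>\<Omega>. norm (x' - x) < \<delta> \<longrightarrow> inner v (x' - x) \<le> \<epsilon> * norm (x' - x)}
      else {})"

definition dir_normal :: "'a::real_inner set \<Rightarrow> 'a \<Rightarrow> 'a \<Rightarrow> 'a set" where
  "dir_normal \<Omega> x u =
     {\<eta>. \<exists>t w \<eta>s. (\<forall>k. t k > 0) \<and> t \<longlonglongrightarrow> 0 \<and> w \<longlonglongrightarrow> u \<and> \<eta>s \<longlonglongrightarrow> \<eta> \<and>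
            (\<forall>k. \<eta>s k \<in> reg_normal \<Omega> (x + t k *\<^sub>R w k))}"

definition reg_coderiv :: "('a::real_inner \<Rightarrow> 'b::real_inner set) \<Rightarrow> 'a \<times> 'b \<Rightarrow> 'b \<Rightarrow> 'a set" where
  "reg_coderiv S p \<mu> = {\<xi>. (\<xi>, - \<mu>) \<in> reg_normal (gph S) p}"

definition dir_coderiv :: "('a::real_inner \<Rightarrow> 'b::real_inner set) \<Rightarrow> 'a \<times> 'b \<Rightarrow> 'a \<times> 'b \<Rightarrow> 'b \<Rightarrow> 'a set" where
  "dir_coderiv S p d \<mu> = {\<xi>. (\<xi>, - \<mu>) \<in> dir_normal (gph S) p d}"

definition dir_pseudo_normal :: "('x::real_inner \<Rightarrow> 'y::real_inner set) \<Rightarrow> 'x \<Rightarrow> 'y \<Rightarrow> 'x \<Rightarrow> bool" where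
  "dir_pseudo_normal \<Phi> xb yb u \<longleftrightarrow>
     \<not> (\<exists>lam. lam \<noteq> 0 \<and> 0 \<in> dir_coderiv \<Phi> (xb, yb) (u, 0) lam \<and>
          (\<exists>xs ys lams \<eta>s.
             (\<forall>k. ys k \<in> \<Phi> (xs k) \<and> xs k \<noteq> xb) \<and>
             xs \<longlonglongrightarrow> xb \<and> ys \<longlonglongrightarrow> yb \<and> lams \<longlonglongrightarrow> lam \<and> \<eta>s \<longlonglongrightarrow> 0 \<and>
             (\<lambda>k. (1 / norm (xs k - xb)) *\<^sub>R (xs k - xb)) \<longlonglongrightarrow> u \<and>
             (\<lambda>k. (1 / norm (xs k - xb)) *\<^sub>R (ys k - yb)) \<longlonglongrightarrow> 0 \<and>
             (\<forall>k. \<eta>s k \<in> reg_coderiv \<Phi> (xs k, ys k) (lams k)) \<and>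
             (\<forall>k. inner lam (ys k - yb) > 0)))"

definition dir_quasi_normal :: "('x::real_inner \<Rightarrow> 'y::real_inner set) \<Rightarrow> 'x \<Rightarrow> 'y \<Rightarrow> 'x \<Rightarrow> 'y set \<Rightarrow> bool" where
  "dir_quasi_normal \<Phi> xb yb u B \<longleftrightarrow>
     \<not> (\<exists>lam. lam \<noteq> 0 \<and> 0 \<in> dir_coderiv \<Phi> (xb, yb) (u, 0) lam \<and>
          (\<exists>xs ys lams \<eta>s.
             (\<forall>k. ys k \<in> \<Phi> (xs k) \<and> xs k \<noteq> xb) \<and>
             xs \<longlonglongrightarrow> xb \<and> ys \<longlonglongrightarrow> yb \<and> lams \<longlonglongrightarrow> lam \<and> \<eta>s \<longlonglongrightarrow> 0 \<and>
             (\<lambda>k. (1 / norm (xs k - xb)) *\<^sub>R (xs k - xb)) \<longlonglongrightarrow> u \<and>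
             (\<lambda>k. (1 / norm (xs k - xb)) *\<^sub>R (ys k - yb)) \<longlonglongrightarrow> 0 \<and>
             (\<forall>k. \<eta>s k \<in> reg_coderiv \<Phi> (xs k, ys k) (lams k)) \<and>
             (\<forall>k. \<forall>e\<in>B. inner lam e \<noteq> 0 \<longrightarrow> inner lam e * inner (ys k - yb) e > 0)))"

definition orthonormal_basis :: "'a::euclidean_space set \<Rightarrow> bool" where
  "orthonormal_basis B \<longleftrightarrow> (\<forall>e\<in>B. norm e = 1) \<and> pairwise orthogonal B \<and> span B = UNIV"

definition PhiMap :: "'a::real_inner set \<Rightarrow> ('a \<Rightarrow> 'b::real_inner set) \<Rightarrow> 'a \<times> 'b \<Rightarrow> ('a \<times> 'b) set" where
  "PhiMap \<Omega> S x = {(w - fst x, v - snd x) | w v. w \<in> \<Omega> \<and> v \<in> S (fst x)}"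

end

theory Submission
  imports Defs
begin

text \<open>The graph of \<Phi> is a linear reparametrisation of \<Omega> \<times> gph S \<times> X2:
  ((x1, x2), (y1, y2)) lies in gph \<Phi> iff x1 + y1 \<in> \<Omega> and (x1, x2 + y2) \<in> gph S.
  Testing a regular normal ((\<xi>1, \<xi>2), (\<zeta>1, \<zeta>2)) to gph \<Phi> along this parametrisation shows
  \<xi>2 = \<zeta>2, that \<zeta>1 is a regular normal to \<Omega> at x1 + y1 and that (\<xi>1 - \<zeta>1, \<zeta>2) is a regular
  normal to gph S at (x1, x2 + y2); being linear in the normal and in the base point, this splitting
  passes to directional limiting normals. For a multiplier (\<lambda>1, \<lambda>2) of \<Phi> with approximating
  multipliers (\<lambda>1_k, \<lambda>2_k) and regular coderivative elements \<eta>_k \<rightarrow> 0, the splitting gives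
  \<lambda>2_k = - snd \<eta>_k \<rightarrow> 0, hence \<lambda>2 = 0; so sequences witnessing a failure of directional pseudo- or
  quasi-normality of \<Phi> are, with \<lambda> = \<lambda>1 and \<mu>_k = \<lambda>2_k, exactly the sequences the hypotheses exclude.\<close>

lemma mem_PhiMap: "y \<in> PhiMap \<Omega> S x \<longleftrightarrow> fst x + fst y \<in> \<Omega> \<and> snd x + snd y \<in> S (fst x)"
  unfolding PhiMap_def by (force simp: prod_eq_iff algebra_simps)

lemma reg_normal_UNIV: "reg_normal UNIV x = {0}"
proof -
  have "v = 0" if v: "v \<in> reg_normal UNIV x" for v
  proof (rule ccontr)
    assume "v \<noteq> 0"
    have "\<forall>\<epsilon>>0. \<exists>\<delta>>0. \<forall>x'. norm (x' - x) < \<delta> \<longrightarrow> inner v (x' - x) \<le> \<epsilon> * norm (x' - x)"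
      using v by (simp add: reg_normal_def)
    moreover have "norm v / 2 > 0" using \<open>v \<noteq> 0\<close> by simp
    ultimately obtain \<delta> where "\<delta> > 0"
      and \<delta>: "\<And>x'. norm (x' - x) < \<delta> \<Longrightarrow> inner v (x' - x) \<le> norm v / 2 * norm (x' - x)"
      by blast
    define s where "s = \<delta> / (2 * norm v)"
    have "s > 0" using \<open>\<delta> > 0\<close> \<open>v \<noteq> 0\<close> by (simp add: s_def)
    have "norm ((x + s *\<^sub>R v) - x) < \<delta>"
      using \<open>\<delta> > 0\<close> \<open>v \<noteq> 0\<close> by (simp add: s_def)
    from \<delta>[OF this] have "s * inner v v \<le> s * (norm v * norm v) / 2"
      using \<open>s > 0\<close> by simp
    with \<open>s > 0\<close> \<open>v \<noteq> 0\<close> show False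
      by (simp add: dot_square_norm power2_eq_square)
  qed
  moreover have "0 \<in> reg_normal UNIV x" unfolding reg_normal_def by auto
  ultimately show ?thesis by blast
qed

lemma reg_normal_linear_pullback:
  assumes v: "v \<in> reg_normal A p" and "b \<in> B" and L: "bounded_linear L"
    and into: "\<And>z. z \<in> B \<Longrightarrow> p + L (z - b) \<in> A"
    and adj: "\<And>z. inner w z = inner v (L z)"
  shows "w \<in> reg_normal B b"
proof -
  obtain K where "K > 0" and K: "\<And>z. norm (L z) \<le> norm z * K"
    using bounded_linear.pos_bounded[OF L] by blast
  have v_reg: "\<forall>\<epsilon>>0. \<exists>\<delta>>0. \<forall>q\<in>A. norm (q - p) < \<delta> \<longrightarrow> inner v (q - p) \<le> \<epsilon> * norm (q - p)"
    using v unfolding reg_normal_def by (cases "p \<in> A") auto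
  have "\<exists>\<delta>>0. \<forall>z\<in>B. norm (z - b) < \<delta> \<longrightarrow> inner w (z - b) \<le> \<epsilon> * norm (z - b)"
    if "\<epsilon> > 0" for \<epsilon>
  proof -
    have "\<epsilon> / K > 0" using \<open>\<epsilon> > 0\<close> \<open>K > 0\<close> by simp
    then obtain \<delta> where "\<delta> > 0"
      and \<delta>: "\<And>q. q \<in> A \<Longrightarrow> norm (q - p) < \<delta> \<Longrightarrow> inner v (q - p) \<le> \<epsilon> / K * norm (q - p)"
      using v_reg by blast
    have "inner w (z - b) \<le> \<epsilon> * norm (z - b)" if "z \<in> B" "norm (z - b) < \<delta> / K" for z
    proof -
      have "norm (z - b) * K < \<delta>"
        using that(2) \<open>K > 0\<close> by (simp add: pos_less_divide_eq)
      then have "norm (L (z - b)) < \<delta>"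
        using K[of "z - b"] by linarith
      then have "inner v (L (z - b)) \<le> \<epsilon> / K * norm (L (z - b))"
        using \<delta>[OF into[OF \<open>z \<in> B\<close>]] by simp
      also have "\<dots> \<le> \<epsilon> / K * (norm (z - b) * K)"
        using K \<open>\<epsilon> / K > 0\<close> by (intro mult_left_mono) auto
      finally show ?thesis using \<open>K > 0\<close> by (simp add: adj)
    qed
    then show ?thesis using \<open>\<delta> > 0\<close> \<open>K > 0\<close> by (intro exI[of _ "\<delta> / K"]) auto
  qed
  then show ?thesis using \<open>b \<in> B\<close> unfolding reg_normal_def by simp
qed

lemma mem_gph [simp]: "(x, y) \<in> gph F \<longleftrightarrow> y \<in> F x"
  by (simp add: gph_def)

text \<open>The three conclusions test N along linear families of points of gph \<Phi>: shifting x2 against y2,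
  moving y1 alone, and moving (x1, x2 + y2) within gph S while keeping x1 + y1 fixed.\<close>

lemma reg_normal_gph_PhiMap:
  fixes \<Omega> :: "'a::real_inner set" and S :: "'a \<Rightarrow> 'b::real_inner set"
  assumes N: "((\<xi>1, \<xi>2), (\<zeta>1, \<zeta>2)) \<in> reg_normal (gph (PhiMap \<Omega> S)) ((x1, x2), (y1, y2))"
  shows "\<xi>2 = \<zeta>2" and "\<zeta>1 \<in> reg_normal \<Omega> (x1 + y1)"
    and "(\<xi>1 - \<zeta>1, \<zeta>2) \<in> reg_normal (gph S) (x1, x2 + y2)"
proof -
  have "((x1, x2), (y1, y2)) \<in> gph (PhiMap \<Omega> S)"
    using N unfolding reg_normal_def by (auto split: if_splits)
  then have \<Omega>: "x1 + y1 \<in> \<Omega>" and S: "(x1, x2 + y2) \<in> gph S"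
    by (simp_all add: mem_PhiMap)
  have "bounded_linear (\<lambda>d::'b. ((0::'a, d), (0::'a, - d)))"
    by (intro bounded_linear_Pair bounded_linear_zero bounded_linear_ident bounded_linear_minus)
  from reg_normal_linear_pullback[OF N UNIV_I this, where w = "\<xi>2 - \<zeta>2" and b = 0]
  have "\<xi>2 - \<zeta>2 \<in> reg_normal UNIV 0"
    using S \<Omega> by (simp add: mem_PhiMap algebra_simps inner_diff_left)
  then show "\<xi>2 = \<zeta>2" by (simp add: reg_normal_UNIV)
  have "bounded_linear (\<lambda>w::'a. ((0::'a, 0::'b), (w, 0::'b)))"
    by (intro bounded_linear_Pair bounded_linear_zero bounded_linear_ident)
  from reg_normal_linear_pullback[OF N \<Omega> this, where w = \<zeta>1]
  show "\<zeta>1 \<in> reg_normal \<Omega> (x1 + y1)"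
    using S by (simp add: mem_PhiMap algebra_simps)
  have "bounded_linear (\<lambda>z::'a \<times> 'b. ((fst z, 0::'b), (- fst z, snd z)))"
    by (intro bounded_linear_Pair bounded_linear_zero bounded_linear_fst bounded_linear_snd bounded_linear_minus)
  from reg_normal_linear_pullback[OF N S this, where w = "(\<xi>1 - \<zeta>1, \<zeta>2)"]
  show "(\<xi>1 - \<zeta>1, \<zeta>2) \<in> reg_normal (gph S) (x1, x2 + y2)"
    using \<Omega> by (auto simp: mem_PhiMap algebra_simps inner_diff_left)
qed

lemma dir_normal_linear_transfer:
  assumes \<pi>: "bounded_linear \<pi>" and M: "bounded_linear M"
    and reg: "\<And>P N. N \<in> reg_normal A P \<Longrightarrow> M N \<in> reg_normal B (\<pi> P)"
    and v: "v \<in> dir_normal A p d"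
  shows "M v \<in> dir_normal B (\<pi> p) (\<pi> d)"
proof -
  obtain t w \<eta>s where t: "\<forall>k. t k > 0" "t \<longlonglongrightarrow> 0" and "w \<longlonglongrightarrow> d" "\<eta>s \<longlonglongrightarrow> v"
    and \<eta>s: "\<forall>k. \<eta>s k \<in> reg_normal A (p + t k *\<^sub>R w k)"
    using v unfolding dir_normal_def by blast
  have "(\<lambda>k. \<pi> (w k)) \<longlonglongrightarrow> \<pi> d" "(\<lambda>k. M (\<eta>s k)) \<longlonglongrightarrow> M v"
    using \<open>w \<longlonglongrightarrow> d\<close> \<open>\<eta>s \<longlonglongrightarrow> v\<close> \<pi> M by (simp_all add: bounded_linear.tendsto)
  moreover have "M (\<eta>s k) \<in> reg_normal B (\<pi> p + t k *\<^sub>R \<pi> (w k))" for k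
    using reg[OF \<eta>s[rule_format, of k]] \<pi> by (simp add: linear_add linear_scale bounded_linear.linear)
  ultimately show ?thesis
    using t unfolding dir_normal_def by blast
qed

lemma dir_normal_gph_PhiMap:
  fixes \<Omega> :: "'a::real_inner set" and S :: "'a \<Rightarrow> 'b::real_inner set"
  assumes "((\<xi>1, \<xi>2), (\<zeta>1, \<zeta>2)) \<in> dir_normal (gph (PhiMap \<Omega> S)) ((x1, x2), (y1, y2)) ((d1, d2), (e1, e2))"
  shows "\<zeta>1 \<in> dir_normal \<Omega> (x1 + y1) (d1 + e1)"
    and "(\<xi>1 - \<zeta>1, \<zeta>2) \<in> dir_normal (gph S) (x1, x2 + y2) (d1, d2 + e2)"
proof -
  have reg: "fst (snd N) \<in> reg_normal \<Omega> (fst (fst P) + fst (snd P))"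
    "(fst (fst N) - fst (snd N), snd (snd N)) \<in> reg_normal (gph S) (fst (fst P), snd (fst P) + snd (snd P))"
    if "N \<in> reg_normal (gph (PhiMap \<Omega> S)) P" for N P
    using reg_normal_gph_PhiMap(2,3)[of "fst (fst N)" "snd (fst N)" "fst (snd N)" "snd (snd N)" \<Omega> S
        "fst (fst P)" "snd (fst P)" "fst (snd P)" "snd (snd P)"] that by simp_all
  have "bounded_linear (\<lambda>P. fst (fst P) + fst (snd P))" "bounded_linear (\<lambda>N. fst (snd N))"
    by (intro bounded_linear_add bounded_linear_fst_comp[OF bounded_linear_fst]
        bounded_linear_fst_comp[OF bounded_linear_snd])+
  from dir_normal_linear_transfer[OF this reg(1) assms]
  show "\<zeta>1 \<in> dir_normal \<Omega> (x1 + y1) (d1 + e1)" by simp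
  have "bounded_linear (\<lambda>P. (fst (fst P), snd (fst P) + snd (snd P)))"
    "bounded_linear (\<lambda>N. (fst (fst N) - fst (snd N), snd (snd N)))"
    by (intro bounded_linear_Pair bounded_linear_add bounded_linear_sub
        bounded_linear_fst_comp[OF bounded_linear_fst] bounded_linear_fst_comp[OF bounded_linear_snd]
        bounded_linear_snd_comp[OF bounded_linear_fst] bounded_linear_snd_comp[OF bounded_linear_snd])+
  from dir_normal_linear_transfer[OF this reg(2) assms]
  show "(\<xi>1 - \<zeta>1, \<zeta>2) \<in> dir_normal (gph S) (x1, x2 + y2) (d1, d2 + e2)" by simp
qed

lemma PhiMap_multipliers_reduce:
  fixes \<Omega> :: "'a::real_inner set" and S :: "'a \<Rightarrow> 'b::real_inner set" and lam :: "'a \<times> 'b"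
  assumes lim: "0 \<in> dir_coderiv (PhiMap \<Omega> S) (xb, 0) (u, 0) lam"
    and reg: "\<forall>k. \<eta>s k \<in> reg_coderiv (PhiMap \<Omega> S) (xs k, ys k) (lams k)"
    and "lams \<longlonglongrightarrow> lam" and "\<eta>s \<longlonglongrightarrow> 0"
  shows "snd lam = 0" and "fst lam \<in> dir_coderiv S xb u 0"
    and "- fst lam \<in> dir_normal \<Omega> (fst xb) (fst u)"
    and "(\<lambda>k. snd (lams k)) \<longlonglongrightarrow> 0"
    and "(\<lambda>k. fst (lams k)) \<longlonglongrightarrow> fst lam" and "(\<lambda>k. fst (\<eta>s k)) \<longlonglongrightarrow> 0"
    and "\<And>k. fst (\<eta>s k) + fst (lams k) \<in> reg_coderiv S (fst (xs k), snd (xs k) + snd (ys k)) (snd (lams k))"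
    and "\<And>k. - fst (lams k) \<in> reg_normal \<Omega> (fst (xs k) + fst (ys k))"
proof -
  have N: "((fst (\<eta>s k), snd (\<eta>s k)), (- fst (lams k), - snd (lams k)))
      \<in> reg_normal (gph (PhiMap \<Omega> S)) ((fst (xs k), snd (xs k)), (fst (ys k), snd (ys k)))" for k
    using reg by (simp add: reg_coderiv_def flip: uminus_Pair)
  note reg_normal_gph_PhiMap[OF N]
  then show "\<And>k. fst (\<eta>s k) + fst (lams k) \<in> reg_coderiv S (fst (xs k), snd (xs k) + snd (ys k)) (snd (lams k))"
    and "\<And>k. - fst (lams k) \<in> reg_normal \<Omega> (fst (xs k) + fst (ys k))"
    by (simp_all add: reg_coderiv_def)
  show "(\<lambda>k. fst (lams k)) \<longlonglongrightarrow> fst lam" "(\<lambda>k. fst (\<eta>s k)) \<longlonglongrightarrow> 0"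
    using tendsto_fst[OF \<open>lams \<longlonglongrightarrow> lam\<close>] tendsto_fst[OF \<open>\<eta>s \<longlonglongrightarrow> 0\<close>] by simp_all
  have "(\<lambda>k. - snd (\<eta>s k)) \<longlonglongrightarrow> 0"
    using tendsto_minus[OF tendsto_snd[OF \<open>\<eta>s \<longlonglongrightarrow> 0\<close>]] by simp
  then show "(\<lambda>k. snd (lams k)) \<longlonglongrightarrow> 0"
    using reg_normal_gph_PhiMap(1)[OF N] by simp
  then show "snd lam = 0"
    using tendsto_snd[OF \<open>lams \<longlonglongrightarrow> lam\<close>] LIMSEQ_unique by blast
  moreover have "((0, 0), (- fst lam, - snd lam))
      \<in> dir_normal (gph (PhiMap \<Omega> S)) ((fst xb, snd xb), (0, 0)) ((fst u, snd u), (0, 0))"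
    using lim unfolding dir_coderiv_def by (simp add: zero_prod_def flip: uminus_Pair)
  note dir_normal_gph_PhiMap[OF this]
  ultimately show "fst lam \<in> dir_coderiv S xb u 0" and "- fst lam \<in> dir_normal \<Omega> (fst xb) (fst u)"
    by (simp_all add: dir_coderiv_def)
qed

lemma not_dir_pseudo_normal_PhiMapE:
  fixes \<Omega> :: "'a::real_inner set" and S :: "'a \<Rightarrow> 'b::real_inner set"
  assumes "\<not> dir_pseudo_normal (PhiMap \<Omega> S) xb 0 u"
  obtains lam xs ys lams \<eta>s \<mu>s where "lam \<noteq> 0" "lam \<in> dir_coderiv S xb u 0"
    "- lam \<in> dir_normal \<Omega> (fst xb) (fst u)"
    "\<forall>k. ys k \<in> PhiMap \<Omega> S (xs k) \<and> xs k \<noteq> xb"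
    "xs \<longlonglongrightarrow> xb" "ys \<longlonglongrightarrow> 0" "lams \<longlonglongrightarrow> lam" "\<mu>s \<longlonglongrightarrow> 0" "\<eta>s \<longlonglongrightarrow> 0"
    "(\<lambda>k. (1 / norm (xs k - xb)) *\<^sub>R (xs k - xb)) \<longlonglongrightarrow> u"
    "(\<lambda>k. (1 / norm (xs k - xb)) *\<^sub>R ys k) \<longlonglongrightarrow> 0"
    "\<forall>k. \<eta>s k + lams k \<in> reg_coderiv S (fst (xs k), snd (xs k) + snd (ys k)) (\<mu>s k) \<and>
         - lams k \<in> reg_normal \<Omega> (fst (xs k) + fst (ys k)) \<and> inner lam (fst (ys k)) > 0"
proof -
  obtain lam xs ys lams \<eta>s where "lam \<noteq> 0" and lim: "0 \<in> dir_coderiv (PhiMap \<Omega> S) (xb, 0) (u, 0) lam"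
    and seq: "\<forall>k. ys k \<in> PhiMap \<Omega> S (xs k) \<and> xs k \<noteq> xb" "xs \<longlonglongrightarrow> xb" "ys \<longlonglongrightarrow> 0"
      "(\<lambda>k. (1 / norm (xs k - xb)) *\<^sub>R (xs k - xb)) \<longlonglongrightarrow> u"
      "(\<lambda>k. (1 / norm (xs k - xb)) *\<^sub>R (ys k - 0)) \<longlonglongrightarrow> 0"
    and "lams \<longlonglongrightarrow> lam" "\<eta>s \<longlonglongrightarrow> 0"
    and reg: "\<forall>k. \<eta>s k \<in> reg_coderiv (PhiMap \<Omega> S) (xs k, ys k) (lams k)"
    and sign: "\<forall>k. inner lam (ys k - 0) > 0"
    using assms unfolding dir_pseudo_normal_def by blast
  note reduced = PhiMap_multipliers_reduce[OF lim reg \<open>lams \<longlonglongrightarrow> lam\<close> \<open>\<eta>s \<longlonglongrightarrow> 0\<close>]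
  have sign_fst: "inner (fst lam) (fst (ys k)) > 0" for k
    using sign[rule_format, of k] reduced(1) by (simp add: inner_prod_def)
  show thesis
  proof (rule that[where lam = "fst lam" and xs = xs and ys = ys and lams = "\<lambda>k. fst (lams k)"
        and \<eta>s = "\<lambda>k. fst (\<eta>s k)" and \<mu>s = "\<lambda>k. snd (lams k)"])
    show "fst lam \<noteq> 0" using \<open>lam \<noteq> 0\<close> reduced(1) by (simp add: prod_eq_iff)
    show "\<forall>k. fst (\<eta>s k) + fst (lams k) \<in> reg_coderiv S (fst (xs k), snd (xs k) + snd (ys k)) (snd (lams k)) \<and>
         - fst (lams k) \<in> reg_normal \<Omega> (fst (xs k) + fst (ys k)) \<and> inner (fst lam) (fst (ys k)) > 0"
      using reduced sign_fst by simp
  qed (use reduced seq in simp_all)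
qed

lemma not_dir_quasi_normal_PhiMapE:
  fixes \<Omega> :: "'a::real_inner set" and S :: "'a \<Rightarrow> 'b::real_inner set"
  assumes "\<not> dir_quasi_normal (PhiMap \<Omega> S) xb 0 u ((\<lambda>e. (e, 0)) ` E1 \<union> (\<lambda>e. (0, e)) ` E2)"
  obtains lam xs ys lams \<eta>s \<mu>s where "lam \<noteq> 0" "lam \<in> dir_coderiv S xb u 0"
    "- lam \<in> dir_normal \<Omega> (fst xb) (fst u)"
    "\<forall>k. ys k \<in> PhiMap \<Omega> S (xs k) \<and> xs k \<noteq> xb"
    "xs \<longlonglongrightarrow> xb" "ys \<longlonglongrightarrow> 0" "lams \<longlonglongrightarrow> lam" "\<mu>s \<longlonglongrightarrow> 0" "\<eta>s \<longlonglongrightarrow> 0"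
    "(\<lambda>k. (1 / norm (xs k - xb)) *\<^sub>R (xs k - xb)) \<longlonglongrightarrow> u"
    "(\<lambda>k. (1 / norm (xs k - xb)) *\<^sub>R ys k) \<longlonglongrightarrow> 0"
    "\<forall>k. \<eta>s k + lams k \<in> reg_coderiv S (fst (xs k), snd (xs k) + snd (ys k)) (\<mu>s k) \<and>
         - lams k \<in> reg_normal \<Omega> (fst (xs k) + fst (ys k)) \<and>
         (\<forall>e\<in>E1. inner lam e \<noteq> 0 \<longrightarrow> inner lam e * inner (fst (ys k)) e > 0)"
proof -
  obtain lam xs ys lams \<eta>s where "lam \<noteq> 0" and lim: "0 \<in> dir_coderiv (PhiMap \<Omega> S) (xb, 0) (u, 0) lam"
    and seq: "\<forall>k. ys k \<in> PhiMap \<Omega> S (xs k) \<and> xs k \<noteq> xb" "xs \<longlonglongrightarrow> xb" "ys \<longlonglongrightarrow> 0"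
      "(\<lambda>k. (1 / norm (xs k - xb)) *\<^sub>R (xs k - xb)) \<longlonglongrightarrow> u"
      "(\<lambda>k. (1 / norm (xs k - xb)) *\<^sub>R (ys k - 0)) \<longlonglongrightarrow> 0"
    and "lams \<longlonglongrightarrow> lam" "\<eta>s \<longlonglongrightarrow> 0"
    and reg: "\<forall>k. \<eta>s k \<in> reg_coderiv (PhiMap \<Omega> S) (xs k, ys k) (lams k)"
    and sign: "\<forall>k. \<forall>e\<in>(\<lambda>e. (e, 0)) ` E1 \<union> (\<lambda>e. (0, e)) ` E2.
      inner lam e \<noteq> 0 \<longrightarrow> inner lam e * inner (ys k - 0) e > 0"
    using assms unfolding dir_quasi_normal_def by blast
  have sign_E1: "inner (fst lam) e * inner (fst (ys k)) e > 0" if "e \<in> E1" "inner (fst lam) e \<noteq> 0" for k e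
    using sign[rule_format, of "(e, 0)" k] that by (simp add: inner_Pair_0)
  note reduced = PhiMap_multipliers_reduce[OF lim reg \<open>lams \<longlonglongrightarrow> lam\<close> \<open>\<eta>s \<longlonglongrightarrow> 0\<close>]
  show thesis
  proof (rule that[where lam = "fst lam" and xs = xs and ys = ys and lams = "\<lambda>k. fst (lams k)"
        and \<eta>s = "\<lambda>k. fst (\<eta>s k)" and \<mu>s = "\<lambda>k. snd (lams k)"])
    show "fst lam \<noteq> 0" using \<open>lam \<noteq> 0\<close> reduced(1) by (simp add: prod_eq_iff)
    show "\<forall>k. fst (\<eta>s k) + fst (lams k) \<in> reg_coderiv S (fst (xs k), snd (xs k) + snd (ys k)) (snd (lams k)) \<and>
         - fst (lams k) \<in> reg_normal \<Omega> (fst (xs k) + fst (ys k)) \<and>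
         (\<forall>e\<in>E1. inner (fst lam) e \<noteq> 0 \<longrightarrow> inner (fst lam) e * inner (fst (ys k)) e > 0)"
      using reduced sign_E1 by simp
  qed (use reduced seq in simp_all)
qed

theorem mainTheorem7:
  fixes \<Omega> :: "'a::euclidean_space set" and S :: "'a \<Rightarrow> 'b::euclidean_space set"
    and xb :: "'a \<times> 'b" and u :: "'a \<times> 'b"
  assumes "closed (gph S)" and "closed \<Omega>"
    and "(0::'a \<times> 'b) \<in> PhiMap \<Omega> S xb"
    and "norm u = 1"
  shows
   "(\<not> (\<exists>lam::'a. lam \<noteq> 0 \<and> lam \<in> dir_coderiv S xb u 0 \<and> - lam \<in> dir_normal \<Omega> (fst xb) (fst u) \<and>
        (\<exists>(xs :: nat \<Rightarrow> 'a \<times> 'b) (ys :: nat \<Rightarrow> 'a \<times> 'b) (lams :: nat \<Rightarrow> 'a) (\<eta>s :: nat \<Rightarrow> 'a) (\<mu>s :: nat \<Rightarrow> 'b).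
           (\<forall>k. ys k \<in> PhiMap \<Omega> S (xs k) \<and> xs k \<noteq> xb) \<and>
           xs \<longlonglongrightarrow> xb \<and> ys \<longlonglongrightarrow> 0 \<and> lams \<longlonglongrightarrow> lam \<and> \<mu>s \<longlonglongrightarrow> 0 \<and> \<eta>s \<longlonglongrightarrow> 0 \<and>
           (\<lambda>k. (1 / norm (xs k - xb)) *\<^sub>R (xs k - xb)) \<longlonglongrightarrow> u \<and>
           (\<lambda>k. (1 / norm (xs k - xb)) *\<^sub>R ys k) \<longlonglongrightarrow> 0 \<and>
           (\<forall>k. \<eta>s k + lams k \<in> reg_coderiv S (fst (xs k), snd (xs k) + snd (ys k)) (\<mu>s k) \<and>
                - lams k \<in> reg_normal \<Omega> (fst (xs k) + fst (ys k)) \<and>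
                inner lam (fst (ys k)) > 0)))
     \<longrightarrow> dir_pseudo_normal (PhiMap \<Omega> S) xb 0 u)
  \<and>
   (\<forall>(E1 :: 'a set) (E2 :: 'b set). orthonormal_basis E1 \<and> orthonormal_basis E2 \<and>
     \<not> (\<exists>lam::'a. lam \<noteq> 0 \<and> lam \<in> dir_coderiv S xb u 0 \<and> - lam \<in> dir_normal \<Omega> (fst xb) (fst u) \<and>
        (\<exists>(xs :: nat \<Rightarrow> 'a \<times> 'b) (ys :: nat \<Rightarrow> 'a \<times> 'b) (lams :: nat \<Rightarrow> 'a) (\<eta>s :: nat \<Rightarrow> 'a) (\<mu>s :: nat \<Rightarrow> 'b).
           (\<forall>k. ys k \<in> PhiMap \<Omega> S (xs k) \<and> xs k \<noteq> xb) \<and>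
           xs \<longlonglongrightarrow> xb \<and> ys \<longlonglongrightarrow> 0 \<and> lams \<longlonglongrightarrow> lam \<and> \<mu>s \<longlonglongrightarrow> 0 \<and> \<eta>s \<longlonglongrightarrow> 0 \<and>
           (\<lambda>k. (1 / norm (xs k - xb)) *\<^sub>R (xs k - xb)) \<longlonglongrightarrow> u \<and>
           (\<lambda>k. (1 / norm (xs k - xb)) *\<^sub>R ys k) \<longlonglongrightarrow> 0 \<and>
           (\<forall>k. \<eta>s k + lams k \<in> reg_coderiv S (fst (xs k), snd (xs k) + snd (ys k)) (\<mu>s k) \<and>
                - lams k \<in> reg_normal \<Omega> (fst (xs k) + fst (ys k)) \<and>
                (\<forall>e\<in>E1. inner lam e \<noteq> 0 \<longrightarrow> inner lam e * inner (fst (ys k)) e > 0))))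
     \<longrightarrow> dir_quasi_normal (PhiMap \<Omega> S) xb 0 u
           ((\<lambda>e. (e, 0)) ` E1 \<union> (\<lambda>e. (0, e)) ` E2))"
  apply (intro conjI allI impI; (elim conjE)?; erule contrapos_np)
   apply (erule not_dir_pseudo_normal_PhiMapE; blast)
  apply (erule not_dir_quasi_normal_PhiMapE; blast)
  done

end
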